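(* Assume (A2) and (A3). For every $\delta>0$, on the event $\{20\bar\Delta_{\widehat g}\le\delta\}$, $$\widehat R_x(\delta)\le C\,\widehat R(\delta)+C\sqrt{\frac{\bar\Delta_{\widehat g}}n},$$ where $C>0$ is an absolute constant. (The statement holds for every realization of $X_1,\dots,X_n,Z_1,\dots,Z_n$.)
   Context: $\mathcal Z\subseteq\mathbb R^r$; $Z$ random in $\mathcal Z$ with law $\rho$; $K$ kernel on $\mathcal Z$ with RKHS $\mathcal H_K$, norm $\|\cdot\|_K$, $K_v=K(v,\cdot)$. (A2) $K$ continuous, symmetric, psd, $\sup K\le\kappa^2<\infty$. (A3) $L_Kf=\int K(z,\cdot)f(z)d\rho(z)=\sum_j\mu_j\langle\phi_j,f\rangle_\rho\phi_j$ with nonincreasing $\mu_j\ge0$, $\mu_1>0$, $\{\phi_j\}$ orthonormal basis of $\mathcal L^2(\rho)$. Given $Z_1,\dots,Z_n\in\mathcal Z$, $X_1,\dots,X_n\in\mathcal X$ and a measurable $\widehat g:\mathcal X\to\mathcal Z$, let $\widehat Z_i=\widehat g(X_i)$. $\mathbf K_x$ ($\mathbf K$) is the $n\times n$ matrix with entries $n^{-1}K(\widehat Z_i,\widehat Z_j)$ ($n^{-1}K(Z_i,Z_j)$), with eigenvalues $\widehat\mu_{x,1}\ge\dots\ge\widehat\mu_{x,n}$ ($\widehat\mu_1\ge\dots\ge\widehat\mu_n$); $\widehat R_x(\delta)=(\frac1n\sum_{j=1}^n\min\{\delta,\widehat\mu_{x,j}\})^{1/2}$, $\widehat R(\delta)=(\frac1n\sum_{j=1}^n\min\{\delta,\widehat\mu_j\})^{1/2}$.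 $\Delta_{i,\widehat g}=\|K_{Z_i}-K_{\widehat Z_i}\|_K^2$ and $\bar\Delta_{\widehat g}=\frac1n\sum_{i=1}^n\Delta_{i,\widehat g}$. *)

theory Defs
  imports "HOL-Analysis.Analysis" "Jordan_Normal_Form.Char_Poly"
begin

text \<open>Points of \<open>\<real>^r\<close> are represented as functions \<open>nat \<Rightarrow> real\<close> vanishing at
  indices \<open>\<ge> r\<close> (product topology = Euclidean topology on this subspace).\<close>

definition in_Rr :: "nat \<Rightarrow> (nat \<Rightarrow> real) \<Rightarrow> bool" where
  "in_Rr r z \<longleftrightarrow> (\<forall>i\<ge>r. z i = 0)"

definition kernel_A2 :: "'z::topological_space set \<Rightarrow> ('z \<Rightarrow> 'z \<Rightarrow> real) \<Rightarrow> real \<Rightarrow> bool" where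
  "kernel_A2 Zs K \<kappa> \<longleftrightarrow>
     continuous_on (Zs \<times> Zs) (\<lambda>(u, v). K u v) \<and>
     (\<forall>u\<in>Zs. \<forall>v\<in>Zs. K u v = K v u) \<and>
     (\<forall>(m::nat) (x::nat \<Rightarrow> 'z) (c::nat \<Rightarrow> real). (\<forall>i<m. x i \<in> Zs) \<longrightarrow>
        0 \<le> (\<Sum>i<m. \<Sum>j<m. c i * c j * K (x i) (x j))) \<and>
     (\<forall>u\<in>Zs. \<forall>v\<in>Zs. K u v \<le> \<kappa>\<^sup>2)"

text \<open>Squared RKHS distance \<open>\<parallel>K_u - K_v\<parallel>_K^2\<close>, written out via the reproducing property.\<close>
definition kdist_sq :: "('z \<Rightarrow> 'z \<Rightarrow> real) \<Rightarrow> 'z \<Rightarrow> 'z \<Rightarrow> real" where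
  "kdist_sq K u v = K u u - 2 * K u v + K v v"

definition gram :: "nat \<Rightarrow> ('z \<Rightarrow> 'z \<Rightarrow> real) \<Rightarrow> (nat \<Rightarrow> 'z) \<Rightarrow> real mat" where
  "gram n K Z = mat n n (\<lambda>(i, j). K (Z i) (Z j) / real n)"

text \<open>Eigenvalues (with multiplicity, nonincreasing) of a real matrix whose
  characteristic polynomial splits over the reals (true for symmetric matrices).\<close>
definition eigs :: "real mat \<Rightarrow> real list" where
  "eigs A = (SOME l. sorted (rev l) \<and> char_poly A = (\<Prod>a\<leftarrow>l. [:- a, 1:]))"

definition Rhat :: "nat \<Rightarrow> ('z \<Rightarrow> 'z \<Rightarrow> real) \<Rightarrow> (nat \<Rightarrow> 'z) \<Rightarrow> real \<Rightarrow> real" where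
  "Rhat n K Z \<delta> = sqrt ((1 / real n) * (\<Sum>j<n. min \<delta> (eigs (gram n K Z) ! j)))"

definition Delta_bar :: "nat \<Rightarrow> ('z \<Rightarrow> 'z \<Rightarrow> real) \<Rightarrow> (nat \<Rightarrow> 'z) \<Rightarrow> (nat \<Rightarrow> 'z) \<Rightarrow> real" where
  "Delta_bar n K Z Zh = (1 / real n) * (\<Sum>i<n. kdist_sq K (Z i) (Zh i))"

end

theory Submission
  imports Defs
begin

text \<open>Let \<open>G\<close> and \<open>H\<close> be the normalised Gram matrices of the \<open>Zh i\<close> and of the \<open>Z i\<close>, with
  eigenvalues \<open>a j\<close> and \<open>b k\<close>, and let \<open>u_k\<close> be an orthonormal eigenbasis of \<open>H\<close>. The squared
  overlaps of two orthonormal bases form a doubly stochastic matrix and \<open>min \<delta>\<close> is concave, so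
  \<open>\<Sum>j min \<delta> (a j) \<le> \<Sum>k min \<delta> (u_k\<^sup>T G u_k)\<close>. In the RKHS,
  \<open>u_k\<^sup>T G u_k = n\<^sup>-\<^sup>1 \<parallel>\<Sum>i u_k i K_{Zh i}\<parallel>\<^sup>2 \<le> 2 b k + 2 n\<^sup>-\<^sup>1 \<parallel>\<Sum>i u_k i (K_{Z i} - K_{Zh i})\<parallel>\<^sup>2\<close>,
  and the last terms sum over \<open>k\<close> to the trace \<open>Delta_bar\<close>. Hence
  \<open>R_x(\<delta>)\<^sup>2 \<le> 2 R(\<delta>)\<^sup>2 + 2 Delta_bar / n\<close>: the claim holds with \<open>C = 2\<close> for every
  \<open>\<delta> \<ge> 0\<close>.\<close>

section \<open>Real symmetric matrices\<close>

definition mmul :: "nat \<Rightarrow> (nat \<Rightarrow> nat \<Rightarrow> real) \<Rightarrow> (nat \<Rightarrow> nat \<Rightarrow> real) \<Rightarrow> nat \<Rightarrow> nat \<Rightarrow> real" where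
  "mmul n X Y = (\<lambda>i j. \<Sum>k<n. X i k * Y k j)"

definition mtransp :: "(nat \<Rightarrow> nat \<Rightarrow> real) \<Rightarrow> nat \<Rightarrow> nat \<Rightarrow> real" where
  "mtransp X = (\<lambda>i j. X j i)"

definition mdiag :: "(nat \<Rightarrow> real) \<Rightarrow> nat \<Rightarrow> nat \<Rightarrow> real" where
  "mdiag d = (\<lambda>i j. if i = j then d i else 0)"

abbreviation mone :: "nat \<Rightarrow> nat \<Rightarrow> real" where
  "mone \<equiv> mdiag (\<lambda>_. 1)"

text \<open>An \<open>n \<times> n\<close> matrix is a function \<open>nat \<Rightarrow> nat \<Rightarrow> real\<close> of which only the entries
  below \<open>n\<close> matter, so matrix identities are stated with \<open>mat_eq_on n\<close>.\<close>

definition mat_eq_on :: "nat \<Rightarrow> (nat \<Rightarrow> nat \<Rightarrow> real) \<Rightarrow> (nat \<Rightarrow> nat \<Rightarrow> real) \<Rightarrow> bool" where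
  "mat_eq_on n X Y \<longleftrightarrow> (\<forall>i<n. \<forall>j<n. X i j = Y i j)"

definition mat_symmetric :: "nat \<Rightarrow> (nat \<Rightarrow> nat \<Rightarrow> real) \<Rightarrow> bool" where
  "mat_symmetric n M \<longleftrightarrow> (\<forall>i<n. \<forall>j<n. M i j = M j i)"

definition orth_mat :: "nat \<Rightarrow> (nat \<Rightarrow> nat \<Rightarrow> real) \<Rightarrow> bool" where
  "orth_mat n U \<longleftrightarrow> mat_eq_on n (mmul n U (mtransp U)) mone \<and> mat_eq_on n (mmul n (mtransp U) U) mone"

definition spectral_decomp ::
    "nat \<Rightarrow> (nat \<Rightarrow> nat \<Rightarrow> real) \<Rightarrow> (nat \<Rightarrow> nat \<Rightarrow> real) \<Rightarrow> (nat \<Rightarrow> real) \<Rightarrow> bool" where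
  "spectral_decomp n M U d \<longleftrightarrow> orth_mat n U \<and> mat_eq_on n M (mmul n (mmul n U (mdiag d)) (mtransp U))"

lemma sum_mult_delta [simp]:
  "(\<Sum>b<(n::nat). f b * (if a = b then 1 else 0)) = (if a < n then f a else (0::real))"
proof -
  have "(\<Sum>b<n. f b * (if a = b then 1 else 0)) = (\<Sum>b<n. if a = b then f b else 0)"
    by (rule sum.cong) auto
  then show ?thesis
    by (simp only: sum.delta sum.delta' finite_lessThan lessThan_iff)
qed

lemma sum_mult_delta' [simp]:
  "(\<Sum>b<(n::nat). f b * (if b = a then 1 else 0)) = (if a < n then f a else (0::real))"
  by (subst eq_commute) (rule sum_mult_delta)

lemma mmul_assoc: "mmul n (mmul n X Y) Z = mmul n X (mmul n Y Z)"
proof (intro ext)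
  fix i j
  have "mmul n (mmul n X Y) Z i j = (\<Sum>k<n. \<Sum>l<n. X i l * (Y l k * Z k j))"
    unfolding mmul_def by (simp add: sum_distrib_right sum_distrib_left mult_ac)
  also have "\<dots> = (\<Sum>l<n. \<Sum>k<n. X i l * (Y l k * Z k j))"
    by (rule sum.swap)
  also have "\<dots> = mmul n X (mmul n Y Z) i j"
    unfolding mmul_def by (simp add: sum_distrib_left)
  finally show "mmul n (mmul n X Y) Z i j = mmul n X (mmul n Y Z) i j" .
qed

lemma mtransp_mmul: "mtransp (mmul n X Y) = mmul n (mtransp Y) (mtransp X)"
  unfolding mtransp_def mmul_def by (auto simp: mult_ac)

lemma mtransp_mtransp [simp]: "mtransp (mtransp X) = X"
  unfolding mtransp_def by simp

lemma mat_eq_on_refl [simp]: "mat_eq_on n X X"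
  unfolding mat_eq_on_def by simp

lemma mat_eq_on_sym: "mat_eq_on n X Y \<Longrightarrow> mat_eq_on n Y X"
  unfolding mat_eq_on_def by simp

lemma mat_eq_on_trans: "mat_eq_on n X Y \<Longrightarrow> mat_eq_on n Y Z \<Longrightarrow> mat_eq_on n X Z"
  unfolding mat_eq_on_def by simp

lemma mmul_cong: "mat_eq_on n X X' \<Longrightarrow> mat_eq_on n Y Y' \<Longrightarrow> mat_eq_on n (mmul n X Y) (mmul n X' Y')"
  unfolding mat_eq_on_def mmul_def by (auto intro!: sum.cong)

lemma mmul_mone_left: "mat_eq_on n (mmul n mone X) X"
  unfolding mat_eq_on_def mmul_def mdiag_def by (simp add: mult.commute)

lemma mmul_mone_right: "mat_eq_on n (mmul n X mone) X"
  unfolding mat_eq_on_def mmul_def mdiag_def by simp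

lemma mmul_cancel_middle:
  assumes "mat_eq_on n (mmul n Q R) mone"
  shows "mat_eq_on n (mmul n (mmul n P Q) (mmul n R S)) (mmul n P S)"
proof -
  have "mmul n (mmul n P Q) (mmul n R S) = mmul n P (mmul n (mmul n Q R) S)"
    by (simp add: mmul_assoc)
  moreover have "mat_eq_on n (mmul n P (mmul n (mmul n Q R) S)) (mmul n P (mmul n mone S))"
    using assms by (intro mmul_cong) auto
  moreover have "mat_eq_on n (mmul n P (mmul n mone S)) (mmul n P S)"
    by (intro mmul_cong mmul_mone_left) simp
  ultimately show ?thesis
    by (metis mat_eq_on_trans)
qed

lemma mat_symmetric_iff: "mat_symmetric n M \<longleftrightarrow> mat_eq_on n (mtransp M) M"
  unfolding mat_symmetric_def mat_eq_on_def mtransp_def by auto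

lemma orth_mat_iff:
  "orth_mat n U \<longleftrightarrow>
     (\<forall>i<n. \<forall>j<n. (\<Sum>k<n. U i k * U j k) = (if i = j then 1 else 0)) \<and>
     (\<forall>i<n. \<forall>j<n. (\<Sum>k<n. U k i * U k j) = (if i = j then 1 else 0))"
  unfolding orth_mat_def mat_eq_on_def mmul_def mtransp_def mdiag_def by simp

lemma orth_mat_mone: "orth_mat n mone"
  unfolding orth_mat_iff mdiag_def by simp

lemma orth_mat_mtransp: "orth_mat n U \<Longrightarrow> orth_mat n (mtransp U)"
  unfolding orth_mat_def by simp

lemma orth_mat_mmul:
  assumes P: "orth_mat n P" and Q: "orth_mat n Q"
  shows "orth_mat n (mmul n P Q)"
proof -
  have "mat_eq_on n (mmul n (mmul n P Q) (mmul n (mtransp Q) (mtransp P))) (mmul n P (mtransp P))"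
    using Q unfolding orth_mat_def by (intro mmul_cancel_middle) simp
  moreover have "mat_eq_on n (mmul n (mmul n (mtransp Q) (mtransp P)) (mmul n P Q)) (mmul n (mtransp Q) Q)"
    using P unfolding orth_mat_def by (intro mmul_cancel_middle) simp
  ultimately show ?thesis
    using P Q unfolding orth_mat_def mtransp_mmul by (metis mat_eq_on_trans)
qed

lemma mmul_mdiag_mtransp:
  "mmul n (mmul n U (mdiag d)) (mtransp U) i j = (\<Sum>k<n. U i k * d k * U j k)"
proof -
  have "mmul n U (mdiag d) i k = (if k < n then U i k * d k else 0)" for k
    unfolding mmul_def mdiag_def by (simp add: if_distrib[of "(*) _"] sum.delta' cong: if_cong)
  then show ?thesis
    unfolding mmul_def mtransp_def by (intro sum.cong) auto
qed

lemma spectral_decomp_entry: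
  "spectral_decomp n M U d \<Longrightarrow> i < n \<Longrightarrow> j < n \<Longrightarrow> M i j = (\<Sum>k<n. U i k * d k * U j k)"
  unfolding spectral_decomp_def mat_eq_on_def mmul_mdiag_mtransp by blast

text \<open>The Householder reflection exchanging the last unit vector and \<open>v\<close>.\<close>

lemma orth_mat_with_last_column:
  assumes v: "(\<Sum>i<Suc m. v i ^ 2) = 1"
  shows "\<exists>H. orth_mat (Suc m) H \<and> (\<forall>i<Suc m. H i m = v i)"
proof (cases "v m = 1")
  case True
  have "(\<Sum>i<m. v i ^ 2) = 0"
    using v True by simp
  then have "\<forall>i<m. v i = 0"
    by (simp add: sum_nonneg_eq_0_iff)
  then have "\<forall>i<Suc m. mone i m = v i"
    using True by (auto simp: mdiag_def less_Suc_eq)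
  then show ?thesis
    using orth_mat_mone by blast
next
  case False
  define n where "n = Suc m"
  have "v m ^ 2 \<le> 1"
    using v member_le_sum[of m "{..<Suc m}" "\<lambda>i. v i ^ 2"] by simp
  then have "v m \<le> 1"
    by (simp add: abs_square_le_1)
  define c where "c = 1 - v m"
  have c: "c > 0"
    using False \<open>v m \<le> 1\<close> unfolding c_def by simp
  define w where "w i = v i - (if i = m then 1 else 0)" for i
  define H where "H i j = (if i = j then 1 else 0) - w i * w j / c" for i j
  have ww: "(\<Sum>k<n. w k * w k) = 2 * c"
  proof -
    have "(\<Sum>k<n. w k * w k) = (\<Sum>k<n. v k ^ 2 - 2 * (v k * (if k = m then 1 else 0))
        + (if k = m then 1 else 0) * (if k = m then 1 else 0))"
      unfolding w_def by (rule sum.cong) (auto simp: power2_eq_square algebra_simps)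
    also have "\<dots> = 1 - 2 * v m + 1"
      using v unfolding n_def by (simp add: sum.distrib sum_subtractf sum_distrib_left[symmetric])
    finally show ?thesis unfolding c_def by simp
  qed
  have rows: "(\<Sum>k<n. H i k * H j k) = (if i = j then 1 else 0)" if "i < n" "j < n" for i j
  proof -
    have "(\<Sum>k<n. H i k * H j k) = (\<Sum>k<n. (if i = k then 1 else 0) * (if j = k then 1 else 0)
        - (w j / c) * (w k * (if i = k then 1 else 0)) - (w i / c) * (w k * (if j = k then 1 else 0))
        + (w i * w j / c ^ 2) * (w k * w k))"
      unfolding H_def by (rule sum.cong) (auto simp: power2_eq_square algebra_simps)
    also have "\<dots> = (\<Sum>k<n. (if i = k then 1 else 0) * (if j = k then 1 else 0))
        - (w j / c) * (\<Sum>k<n. w k * (if i = k then 1 else 0))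
        - (w i / c) * (\<Sum>k<n. w k * (if j = k then 1 else 0))
        + (w i * w j / c ^ 2) * (\<Sum>k<n. w k * w k)"
      by (simp only: sum.distrib sum_subtractf sum_distrib_left)
    also have "\<dots> = (if i = j then 1 else 0) - w j * w i / c - w i * w j / c + (w i * w j / c ^ 2) * (2 * c)"
      using that by (simp add: ww)
    also have "\<dots> = (if i = j then 1 else 0)"
      using c by (simp add: power2_eq_square field_simps)
    finally show ?thesis .
  qed
  have "H k i = H i k" for i k
    unfolding H_def by auto
  with rows have "orth_mat n H"
    unfolding orth_mat_iff by simp
  moreover have "\<forall>i<n. H i m = v i"
    using c unfolding H_def w_def c_def by (auto simp: field_simps)
  ultimately show ?thesis
    unfolding n_def by blast
qed

lemma eigenvector_normalize:
  fixes M :: "nat \<Rightarrow> nat \<Rightarrow> real" and x :: "nat \<Rightarrow> real"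
  assumes "k < n" "x k \<noteq> 0" and ev: "\<forall>i<n. (\<Sum>j<n. M i j * x j) = e * x i"
  shows "\<exists>v. (\<Sum>i<n. v i ^ 2) = 1 \<and> (\<forall>i<n. (\<Sum>j<n. M i j * v j) = e * v i)"
proof -
  define s where "s = (\<Sum>i<n. x i ^ 2)"
  have "x k ^ 2 \<le> s"
    unfolding s_def by (rule member_le_sum) (use assms in auto)
  then have s: "s > 0"
    using assms by (smt (verit) zero_less_power2)
  define v where "v i = x i / sqrt s" for i
  have "(\<Sum>i<n. v i ^ 2) = 1"
    unfolding v_def using s by (simp add: power_divide sum_divide_distrib[symmetric] s_def)
  moreover have "(\<Sum>j<n. M i j * v j) = e * v i" if "i < n" for i
    using ev that unfolding v_def by (simp add: sum_divide_distrib[symmetric])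
  ultimately show ?thesis
    by blast
qed

lemma symmetric_eigenvalue_real:
  fixes M :: "nat \<Rightarrow> nat \<Rightarrow> real" and v :: "nat \<Rightarrow> complex"
  assumes sym: "mat_symmetric n M" and k: "k < n" "v k \<noteq> 0"
    and ev: "\<And>i. i < n \<Longrightarrow> (\<Sum>j<n. of_real (M i j) * v j) = e * v i"
  shows "Im e = 0"
proof -
  define N where "N = (\<Sum>i<n. cmod (v i) ^ 2)"
  have "cmod (v k) ^ 2 \<le> N"
    unfolding N_def by (rule member_le_sum) (use k in auto)
  then have N: "N > 0"
    using k by (smt (verit) zero_less_norm_iff zero_less_power2)
  define S where "S = (\<Sum>i<n. cnj (v i) * (\<Sum>j<n. of_real (M i j) * v j))"
  have "S = (\<Sum>i<n. cnj (v i) * (e * v i))"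
    unfolding S_def using ev by (intro sum.cong refl) simp
  also have "\<dots> = e * (\<Sum>i<n. v i * cnj (v i))"
    by (simp add: sum_distrib_left mult_ac)
  also have "(\<Sum>i<n. v i * cnj (v i)) = of_real N"
    unfolding N_def of_real_sum complex_norm_square ..
  finally have S_eq: "S = e * of_real N" .
  have "cnj S = (\<Sum>i<n. \<Sum>j<n. of_real (M i j) * (v i * cnj (v j)))"
    unfolding S_def by (simp add: sum_distrib_left mult_ac)
  also have "\<dots> = (\<Sum>j<n. \<Sum>i<n. of_real (M i j) * (v i * cnj (v j)))"
    by (rule sum.swap)
  also have "\<dots> = (\<Sum>j<n. \<Sum>i<n. of_real (M j i) * (cnj (v j) * v i))"
    using sym unfolding mat_symmetric_def by (intro sum.cong refl) (auto simp: mult_ac)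
  also have "\<dots> = S"
    unfolding S_def by (simp add: sum_distrib_left mult_ac)
  finally have "cnj e * of_real N = e * of_real N"
    using S_eq by (metis complex_cnj_complex_of_real complex_cnj_mult)
  then have "cnj e = e"
    using N by simp
  then show ?thesis
    by (metis Reals_cnj_iff complex_is_Real_iff)
qed

lemma symmetric_has_unit_eigenvector:
  fixes M :: "nat \<Rightarrow> nat \<Rightarrow> real"
  assumes n: "0 < n" and sym: "mat_symmetric n M"
  shows "\<exists>e v. (\<Sum>i<n. v i ^ 2) = 1 \<and> (\<forall>i<n. (\<Sum>j<n. M i j * v j) = e * v i)"
proof -
  define A where "A = mat n n (\<lambda>(i, j). complex_of_real (M i j))"
  have A: "A \<in> carrier_mat n n"
    unfolding A_def by simp
  obtain as where cp: "char_poly A = (\<Prod>a\<leftarrow>as. [:-a, 1:])" and len: "length as = n"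
    using char_poly_factorized[OF A] by blast
  have "hd as \<in> set as"
    using len n by (cases as) auto
  then have "eigenvalue A (hd as)"
    using eigenvalue_root_char_poly[OF A] linear_poly_root unfolding cp by blast
  then obtain e x where "eigenvector A x e"
    unfolding eigenvalue_def by blast
  then have x: "x \<in> carrier_vec n" "x \<noteq> 0\<^sub>v n" "A *\<^sub>v x = e \<cdot>\<^sub>v x"
    using A unfolding eigenvector_def by auto
  have ev: "(\<Sum>j<n. of_real (M i j) * x $ j) = e * x $ i" if "i < n" for i
  proof -
    have "(A *\<^sub>v x) $ i = (\<Sum>j<n. of_real (M i j) * x $ j)"
      using that x(1) unfolding A_def by (simp add: scalar_prod_def atLeast0LessThan)
    then show ?thesis
      using x(3) that x(1) by simp
  qed
  obtain k where k: "k < n" "x $ k \<noteq> 0"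
    using x(1,2) by (metis eq_vecI carrier_vecD index_zero_vec)
  have "Im e = 0"
    using symmetric_eigenvalue_real[of n M k "\<lambda>j. x $ j" e] sym k ev by blast
  then have re: "(\<Sum>j<n. M i j * Re (x $ j)) = Re e * Re (x $ i)"
    and im: "(\<Sum>j<n. M i j * Im (x $ j)) = Re e * Im (x $ i)" if "i < n" for i
    using arg_cong[OF ev[OF that], of Re] arg_cong[OF ev[OF that], of Im] by (simp_all add: Re_sum Im_sum)
  show ?thesis
  proof (cases "Re (x $ k) = 0")
    case False
    then show ?thesis
      using eigenvector_normalize[of k n "\<lambda>j. Re (x $ j)" M "Re e"] k re by blast
  next
    case True
    then have "Im (x $ k) \<noteq> 0"
      using k(2) complex_eq_iff by force
    then show ?thesis
      using eigenvector_normalize[of k n "\<lambda>j. Im (x $ j)" M "Re e"] k im by blast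
  qed
qed

lemma deflate_eigenvector:
  assumes H: "orth_mat n H" and sym: "mat_symmetric n M" and m: "m < n"
    and ev: "\<forall>i<n. (\<Sum>j<n. M i j * H j m) = e * H i m"
  defines "A \<equiv> mmul n (mmul n (mtransp H) M) H"
  shows "mat_symmetric n A" and "\<forall>i<n. A i m = (if i = m then e else 0)"
proof -
  have "mat_eq_on n (mtransp A) (mmul n (mmul n (mtransp H) M) H)"
    using sym unfolding A_def mtransp_mmul mmul_assoc mat_symmetric_iff by (intro mmul_cong) auto
  then show "mat_symmetric n A"
    unfolding mat_symmetric_iff A_def .
  show "\<forall>i<n. A i m = (if i = m then e else 0)"
  proof (intro allI impI)
    fix i assume i: "i < n"
    have "A i m = (\<Sum>a<n. H a i * (\<Sum>j<n. M a j * H j m))"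
      unfolding A_def mmul_assoc by (simp add: mmul_def mtransp_def)
    also have "\<dots> = (\<Sum>a<n. H a i * (e * H a m))"
      using ev by (intro sum.cong refl) simp
    also have "\<dots> = e * (\<Sum>a<n. H a i * H a m)"
      by (simp add: sum_distrib_left mult_ac)
    also have "\<dots> = (if i = m then e else 0)"
      using H i m unfolding orth_mat_iff by simp
    finally show "A i m = (if i = m then e else 0)" .
  qed
qed

lemma spectral_decomp_extend:
  assumes U: "spectral_decomp m A U d" and sym: "mat_symmetric (Suc m) A"
    and last: "\<forall>i<Suc m. A i m = (if i = m then e else 0)"
  shows "spectral_decomp (Suc m) A
           (\<lambda>i k. if i < m \<and> k < m then U i k else if i = m \<and> k = m then 1 else 0)
           (\<lambda>k. if k < m then d k else e)"
    (is "spectral_decomp _ _ ?U ?d")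
proof -
  have "orth_mat m U"
    using U unfolding spectral_decomp_def by blast
  then have "orth_mat (Suc m) ?U"
    unfolding orth_mat_iff by (auto simp: less_Suc_eq)
  moreover have "A i j = (\<Sum>k<Suc m. ?U i k * ?d k * ?U j k)" if "i < Suc m" "j < Suc m" for i j
  proof (cases "i = m \<or> j = m")
    case True
    then show ?thesis
      using last sym that unfolding mat_symmetric_def by (auto simp: less_Suc_eq)
  next
    case False
    then show ?thesis
      using spectral_decomp_entry[OF U] that by (simp add: less_Suc_eq)
  qed
  ultimately show ?thesis
    unfolding spectral_decomp_def mat_eq_on_def mmul_mdiag_mtransp by blast
qed

lemma spectral_decomp_conj:
  assumes H: "orth_mat n H" and U: "spectral_decomp n (mmul n (mmul n (mtransp H) M) H) U d"
  shows "spectral_decomp n M (mmul n H U) d"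
proof -
  define B where "B = mmul n (mmul n (mtransp H) M) H"
  from U have U: "spectral_decomp n B U d"
    unfolding B_def .
  have HH: "mat_eq_on n (mmul n H (mtransp H)) mone"
    using H unfolding orth_mat_def by blast
  have "mmul n (mmul n H B) (mtransp H) = mmul n (mmul n H (mtransp H)) (mmul n M (mmul n H (mtransp H)))"
    unfolding B_def by (simp add: mmul_assoc)
  moreover have "mat_eq_on n \<dots> (mmul n mone (mmul n M mone))"
    using HH by (intro mmul_cong) auto
  moreover have "mat_eq_on n (mmul n mone (mmul n M mone)) M"
    by (metis mat_eq_on_trans mmul_mone_left mmul_mone_right)
  moreover have "mat_eq_on n (mmul n (mmul n H B) (mtransp H))
      (mmul n (mmul n H (mmul n (mmul n U (mdiag d)) (mtransp U))) (mtransp H))"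
    using U unfolding spectral_decomp_def by (intro mmul_cong) auto
  moreover have "mmul n (mmul n H (mmul n (mmul n U (mdiag d)) (mtransp U))) (mtransp H)
      = mmul n (mmul n (mmul n H U) (mdiag d)) (mtransp (mmul n H U))"
    by (simp add: mmul_assoc mtransp_mmul)
  moreover have "orth_mat n (mmul n H U)"
    using H U unfolding spectral_decomp_def by (blast intro: orth_mat_mmul)
  ultimately show ?thesis
    unfolding spectral_decomp_def by (metis mat_eq_on_sym mat_eq_on_trans)
qed

theorem spectral_decomp_exists:
  assumes "mat_symmetric n M"
  shows "\<exists>U d. spectral_decomp n M U d"
  using assms
proof (induction n arbitrary: M)
  case 0
  show ?case
    unfolding spectral_decomp_def orth_mat_def mat_eq_on_def by simp
next
  case (Suc m)
  obtain e v where v: "(\<Sum>i<Suc m. v i ^ 2) = 1" and ev: "\<forall>i<Suc m. (\<Sum>j<Suc m. M i j * v j) = e * v i"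
    using symmetric_has_unit_eigenvector[OF _ Suc.prems] by blast
  obtain H where H: "orth_mat (Suc m) H" and Hv: "\<forall>i<Suc m. H i m = v i"
    using orth_mat_with_last_column[OF v] by blast
  define A where "A = mmul (Suc m) (mmul (Suc m) (mtransp H) M) H"
  have ev': "\<forall>i<Suc m. (\<Sum>j<Suc m. M i j * H j m) = e * H i m"
    using ev Hv by simp
  note A = deflate_eigenvector[OF H Suc.prems lessI ev', folded A_def]
  have "mat_symmetric m A"
    using A(1) unfolding mat_symmetric_def by simp
  then obtain U d where "spectral_decomp m A U d"
    using Suc.IH by blast
  from spectral_decomp_extend[OF this A] show ?case
    unfolding A_def by (blast intro: spectral_decomp_conj[OF H])
qed

section \<open>Eigenvalue sums\<close>

lemma prod_list_map_mset_eq: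
  "mset xs = mset ys \<Longrightarrow> (\<Prod>a\<leftarrow>xs. g a) = (\<Prod>a\<leftarrow>ys. (g a :: 'b :: comm_monoid_mult))"
  by (metis mset_map prod_mset_prod_list)

lemma mset_eq_if_linear_factors_eq:
  fixes xs ys :: "real list"
  assumes "(\<Prod>a\<leftarrow>xs. [:-a, 1:]) = (\<Prod>a\<leftarrow>ys. [:-a, 1:])"
  shows "mset xs = mset ys"
  using assms
proof (induction xs arbitrary: ys)
  case Nil
  then have "length ys = 0"
    using degree_linear_factors[of uminus ys] by simp
  then show ?case
    by simp
next
  case (Cons x xs)
  have "poly (\<Prod>a\<leftarrow>ys. [:-a, 1:]) x = 0"
    using Cons.prems[symmetric] by simp
  then have "x \<in> set ys"
    by (auto simp: poly_prod_list prod_list_zero_iff o_def)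
  then have ys: "mset ys = mset (x # remove1 x ys)"
    by simp
  have eq: "[:-x, 1:] * (\<Prod>a\<leftarrow>xs. [:-a, 1:]) = [:-x, 1:] * (\<Prod>a\<leftarrow>remove1 x ys. [:-a, 1:])"
    using Cons.prems prod_list_map_mset_eq[OF ys, of "\<lambda>a. [:-a, 1:]"] by simp
  have nz: "[:-x, 1:] \<noteq> (0 :: real poly)"
    by simp
  have "(\<Prod>a\<leftarrow>xs. [:-a, 1:]) = (\<Prod>a\<leftarrow>remove1 x ys. [:-a, 1:])"
    by (rule iffD1[OF mult_left_cancel[OF nz] eq])
  then have "mset xs = mset (remove1 x ys)"
    by (rule Cons.IH)
  then have "mset (x # xs) = mset (x # remove1 x ys)"
    by simp
  then show ?case
    using ys by (rule trans[OF _ sym])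
qed

lemma mat_mmul: "mat n n (\<lambda>(i, j). X i j) * mat n n (\<lambda>(i, j). Y i j) = mat n n (\<lambda>(i, j). mmul n X Y i j)"
  by (rule eq_matI) (auto simp: mmul_def scalar_prod_def atLeast0LessThan)

lemma transpose_mat_mtransp: "transpose_mat (mat n n (\<lambda>(i, j). X i j)) = mat n n (\<lambda>(i, j). mtransp X i j)"
  by (rule eq_matI) (auto simp: mtransp_def)

lemma mat_eq_if_mat_eq_on: "mat_eq_on n X Y \<Longrightarrow> mat n n (\<lambda>(i, j). X i j) = mat n n (\<lambda>(i, j). Y i j)"
  unfolding mat_eq_on_def by (rule eq_matI) auto

lemma one_mat_mone: "1\<^sub>m n = mat n n (\<lambda>(i, j). mone i j)"
  by (rule eq_matI) (auto simp: mdiag_def)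

lemma char_poly_spectral_decomp:
  assumes "spectral_decomp n M U d"
  shows "char_poly (mat n n (\<lambda>(i, j). M i j)) = (\<Prod>a\<leftarrow>map d [0..<n]. [:-a, 1:])"
proof -
  define A where "A = mat n n (\<lambda>(i, j). M i j)"
  define V where "V = mat n n (\<lambda>(i, j). U i j)"
  define D where "D = mat n n (\<lambda>(i, j). mdiag d i j)"
  have "V * transpose_mat V = 1\<^sub>m n" "transpose_mat V * V = 1\<^sub>m n"
    using assms unfolding spectral_decomp_def orth_mat_def V_def transpose_mat_mtransp mat_mmul one_mat_mone
    by (auto intro: mat_eq_if_mat_eq_on)
  moreover have "A = V * D * transpose_mat V"
    using assms unfolding spectral_decomp_def A_def V_def D_def transpose_mat_mtransp mat_mmul
    by (auto intro: mat_eq_if_mat_eq_on)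
  ultimately have "similar_mat_wit A D V (transpose_mat V)"
    by (intro similar_mat_witI) (auto simp: A_def D_def V_def)
  then have "char_poly A = char_poly D"
    by (intro char_poly_similar) (auto simp: similar_mat_def)
  also have "\<dots> = (\<Prod>a\<leftarrow>diag_mat D. [:-a, 1:])"
    by (rule char_poly_upper_triangular[of _ n]) (auto simp: D_def upper_triangular_def mdiag_def)
  also have "diag_mat D = map d [0..<n]"
    unfolding diag_mat_def D_def by (auto simp: mdiag_def)
  finally show ?thesis
    unfolding A_def .
qed

text \<open>Since \<open>eigs\<close> is defined by a choice, only the multiset of its entries is determined.\<close>

lemma sum_eigs_spectral_decomp:
  assumes "spectral_decomp n M U d"
  shows "(\<Sum>j<n. f (eigs (mat n n (\<lambda>(i, j). M i j)) ! j)) = (\<Sum>k<n. f (d k))"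
proof -
  define A where "A = mat n n (\<lambda>(i, j). M i j)"
  define ds where "ds = map d [0..<n]"
  have cp: "char_poly A = (\<Prod>a\<leftarrow>ds. [:-a, 1:])"
    using char_poly_spectral_decomp[OF assms] unfolding A_def ds_def .
  have "\<exists>l. sorted (rev l) \<and> char_poly A = (\<Prod>a\<leftarrow>l. [:-a, 1:])"
  proof (intro exI conjI)
    show "sorted (rev (rev (sort ds)))"
      by simp
    show "char_poly A = (\<Prod>a\<leftarrow>rev (sort ds). [:-a, 1:])"
      unfolding cp by (rule prod_list_map_mset_eq) simp
  qed
  then have "char_poly A = (\<Prod>a\<leftarrow>eigs A. [:-a, 1:])"
    unfolding eigs_def by (metis (mono_tags, lifting) someI_ex)
  then have L: "mset (eigs A) = mset ds"
    using cp by (intro mset_eq_if_linear_factors_eq) simp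
  then have "length (eigs A) = n"
    unfolding ds_def by (metis length_map length_upt minus_nat.diff_0 size_mset)
  then have "(\<Sum>j<n. f (eigs A ! j)) = sum_list (map f (eigs A))"
    unfolding sum_list_sum_nth by (simp add: atLeast0LessThan)
  also have "\<dots> = sum_list (map f ds)"
    using L by (metis mset_map sum_mset_sum_list)
  also have "\<dots> = (\<Sum>k<n. f (d k))"
    unfolding ds_def by (simp add: sum_list_sum_nth atLeast0LessThan)
  finally show ?thesis
    unfolding A_def .
qed

lemma sum_lessThan_rotate3:
  "(\<Sum>k<(n::nat). \<Sum>i<n. \<Sum>j<n. f k i j) = (\<Sum>i<n. \<Sum>j<n. \<Sum>k<n. (f k i j :: real))"
proof -
  have "(\<Sum>k<n. \<Sum>i<n. \<Sum>j<n. f k i j) = (\<Sum>i<n. \<Sum>k<n. \<Sum>j<n. f k i j)"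
    by (rule sum.swap)
  also have "\<dots> = (\<Sum>i<n. \<Sum>j<n. \<Sum>k<n. f k i j)"
    by (rule sum.cong[OF refl], rule sum.swap)
  finally show ?thesis .
qed

definition qform :: "nat \<Rightarrow> (nat \<Rightarrow> real) \<Rightarrow> (nat \<Rightarrow> nat \<Rightarrow> real) \<Rightarrow> real" where
  "qform n c M = (\<Sum>i<n. \<Sum>j<n. c i * c j * M i j)"

lemma qform_spectral_decomp:
  assumes "spectral_decomp n M U d"
  shows "qform n c M = (\<Sum>k<n. d k * (\<Sum>i<n. c i * U i k)\<^sup>2)"
proof -
  have "qform n c M = (\<Sum>i<n. \<Sum>j<n. \<Sum>k<n. d k * ((c i * U i k) * (c j * U j k)))"
    unfolding qform_def using spectral_decomp_entry[OF assms]
    by (intro sum.cong refl) (auto simp: sum_distrib_left mult_ac)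
  also have "\<dots> = (\<Sum>k<n. \<Sum>i<n. \<Sum>j<n. d k * ((c i * U i k) * (c j * U j k)))"
    by (rule sum_lessThan_rotate3[symmetric])
  also have "\<dots> = (\<Sum>k<n. d k * ((\<Sum>i<n. c i * U i k) * (\<Sum>j<n. c j * U j k)))"
    by (simp only: sum_product, simp only: sum_distrib_left)
  also have "\<dots> = (\<Sum>k<n. d k * (\<Sum>i<n. c i * U i k)\<^sup>2)"
    by (simp add: power2_eq_square)
  finally show ?thesis .
qed

lemma qform_eigenvector:
  assumes "spectral_decomp n M U d" "k < n"
  shows "qform n (\<lambda>i. U i k) M = d k"
proof -
  have "(\<Sum>i<n. U i k * U i l)\<^sup>2 = (if k = l then 1 else 0)" if "l < n" for l
    using assms that unfolding spectral_decomp_def orth_mat_iff by simp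
  then show ?thesis
    using assms by (simp add: qform_spectral_decomp)
qed

lemma sum_qform_orth_mat_columns:
  assumes "orth_mat n U"
  shows "(\<Sum>k<n. qform n (\<lambda>i. U i k) M) = (\<Sum>i<n. M i i)"
proof -
  have "(\<Sum>k<n. qform n (\<lambda>i. U i k) M) = (\<Sum>k<n. \<Sum>i<n. \<Sum>j<n. M i j * (U i k * U j k))"
    unfolding qform_def by (simp add: mult_ac)
  also have "\<dots> = (\<Sum>i<n. \<Sum>j<n. \<Sum>k<n. M i j * (U i k * U j k))"
    by (rule sum_lessThan_rotate3)
  also have "\<dots> = (\<Sum>i<n. \<Sum>j<n. M i j * (\<Sum>k<n. U i k * U j k))"
    by (simp add: sum_distrib_left)
  also have "\<dots> = (\<Sum>i<n. M i i)"
    using assms unfolding orth_mat_iff by simp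
  finally show ?thesis .
qed

lemma min_le_convex_comb:
  fixes p q :: real
  assumes "0 \<le> p" "0 \<le> q" "p + q = 1"
  shows "min x y \<le> x * p + y * q"
proof -
  have "min x y = min x y * p + min x y * q"
    using assms(3) by (metis distrib_left mult.commute mult_1)
  also have "\<dots> \<le> x * p + y * q"
    by (intro add_mono mult_right_mono) (use assms in auto)
  finally show ?thesis .
qed

text \<open>The squared overlaps \<open>s j k\<^sup>2\<close> between the eigenbasis \<open>W\<close> and an arbitrary orthonormal
  basis \<open>U\<close> form a doubly stochastic matrix; split each row according to whether the
  \<open>k\<close>-th diagonal entry \<open>qform n (\<lambda>i. U i k) G\<close> of \<open>G\<close> in the basis \<open>U\<close> exceeds \<open>\<delta>\<close>.\<close>

lemma sum_min_eigenvalues_le: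
  assumes G: "spectral_decomp n G W a" and U: "orth_mat n U"
  shows "(\<Sum>j<n. min \<delta> (a j)) \<le> (\<Sum>k<n. min \<delta> (qform n (\<lambda>i. U i k) G))"
proof -
  define s where "s = mmul n (mtransp W) U"
  have "orth_mat n s"
    using G U unfolding s_def spectral_decomp_def by (blast intro: orth_mat_mmul orth_mat_mtransp)
  then have rows: "(\<Sum>k<n. (s j k)\<^sup>2) = 1" if "j < n" for j
    using that unfolding orth_mat_iff by (simp add: power2_eq_square)
  from \<open>orth_mat n s\<close> have cols: "(\<Sum>j<n. (s j k)\<^sup>2) = 1" if "k < n" for k
    using that unfolding orth_mat_iff by (simp add: power2_eq_square)
  define g where "g k = qform n (\<lambda>i. U i k) G" for k
  have g: "g k = (\<Sum>j<n. a j * (s j k)\<^sup>2)" for k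
    unfolding g_def qform_spectral_decomp[OF G] s_def mmul_def mtransp_def by (simp add: mult.commute)
  define T where "T k \<longleftrightarrow> \<delta> \<le> g k" for k
  have "(\<Sum>j<n. min \<delta> (a j))
      \<le> (\<Sum>j<n. \<delta> * (\<Sum>k<n. if T k then (s j k)\<^sup>2 else 0) + a j * (\<Sum>k<n. if T k then 0 else (s j k)\<^sup>2))"
  proof (rule sum_mono)
    fix j assume "j \<in> {..<n}"
    then have "(\<Sum>k<n. if T k then (s j k)\<^sup>2 else 0) + (\<Sum>k<n. if T k then 0 else (s j k)\<^sup>2) = 1"
      using rows by (simp add: sum.distrib[symmetric] if_distrib cong: if_cong)
    then show "min \<delta> (a j) \<le> \<delta> * (\<Sum>k<n. if T k then (s j k)\<^sup>2 else 0) + a j * (\<Sum>k<n. if T k then 0 else (s j k)\<^sup>2)"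
      by (intro min_le_convex_comb) (auto intro: sum_nonneg)
  qed
  also have "\<dots> = (\<Sum>j<n. \<Sum>k<n. if T k then \<delta> * (s j k)\<^sup>2 else a j * (s j k)\<^sup>2)"
    by (intro sum.cong refl) (simp add: sum_distrib_left sum.distrib[symmetric] if_distrib cong: if_cong)
  also have "\<dots> = (\<Sum>k<n. \<Sum>j<n. if T k then \<delta> * (s j k)\<^sup>2 else a j * (s j k)\<^sup>2)"
    by (rule sum.swap)
  also have "\<dots> = (\<Sum>k<n. if T k then \<delta> else g k)"
    using cols by (intro sum.cong refl) (simp add: g sum_distrib_left[symmetric])
  also have "\<dots> = (\<Sum>k<n. min \<delta> (g k))"
    unfolding T_def by (intro sum.cong refl) auto
  finally show ?thesis
    unfolding g_def .
qed

section \<open>Kernel Gram matrices\<close>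

lemma qform_add: "qform n c (\<lambda>i j. F i j + G i j) = qform n c F + qform n c G"
  unfolding qform_def by (simp add: distrib_left sum.distrib)

lemma qform_diff: "qform n c (\<lambda>i j. F i j - G i j) = qform n c F - qform n c G"
  unfolding qform_def by (simp add: right_diff_distrib sum_subtractf)

lemma qform_scale: "qform n c (\<lambda>i j. r * F i j) = r * qform n c F"
  unfolding qform_def by (simp add: sum_distrib_left mult_ac)

lemma qform_divide: "qform n c (\<lambda>i j. F i j / r) = qform n c F / r"
  unfolding qform_def by (simp add: sum_divide_distrib)

text \<open>The Gram matrix of the differences \<open>K_{Z i} - K_{Zh i}\<close> in the RKHS of \<open>K\<close>.\<close>

definition gram_diff :: "('z \<Rightarrow> 'z \<Rightarrow> real) \<Rightarrow> (nat \<Rightarrow> 'z) \<Rightarrow> (nat \<Rightarrow> 'z) \<Rightarrow> nat \<Rightarrow> nat \<Rightarrow> real" where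
  "gram_diff K Z Zh i j = K (Z i) (Z j) - K (Z i) (Zh j) - K (Zh i) (Z j) + K (Zh i) (Zh j)"

lemma sum_lessThan_add: "(\<Sum>p<(n::nat) + m. f p) = (\<Sum>p<n. f p) + (\<Sum>p<m. (f (n + p) :: real))"
  by (induction m) (auto simp: add.commute)

lemma kernel_A2_psd:
  fixes K :: "'z::topological_space \<Rightarrow> 'z \<Rightarrow> real" and m :: nat and x :: "nat \<Rightarrow> 'z"
  assumes "kernel_A2 Zs K \<kappa>" "\<forall>i<m. x i \<in> Zs"
  shows "0 \<le> (\<Sum>i<m. \<Sum>j<m. c i * c j * K (x i) (x j))"
  using assms unfolding kernel_A2_def by blast

lemma kernel_A2_psd_pair:
  fixes Z Zh :: "nat \<Rightarrow> 'z::topological_space"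
  assumes A2: "kernel_A2 Zs K \<kappa>" and Z: "\<forall>i<n. Z i \<in> Zs \<and> Zh i \<in> Zs"
  shows "0 \<le> (\<Sum>i<n. \<Sum>j<n. \<alpha> i * \<alpha> j * K (Z i) (Z j) + \<alpha> i * \<beta> j * K (Z i) (Zh j)
                 + \<beta> i * \<alpha> j * K (Zh i) (Z j) + \<beta> i * \<beta> j * K (Zh i) (Zh j))"
proof -
  define x where "x p = (if p < n then Z p else Zh (p - n))" for p
  define c where "c p = (if p < n then \<alpha> p else \<beta> (p - n))" for p
  have "0 \<le> (\<Sum>p<n + n. \<Sum>q<n + n. c p * c q * K (x p) (x q))"
    using Z by (intro kernel_A2_psd[OF A2]) (auto simp: x_def)
  also have "\<dots> = (\<Sum>i<n. \<Sum>j<n. \<alpha> i * \<alpha> j * K (Z i) (Z j) + \<alpha> i * \<beta> j * K (Z i) (Zh j)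
                 + \<beta> i * \<alpha> j * K (Zh i) (Z j) + \<beta> i * \<beta> j * K (Zh i) (Zh j))"
    unfolding sum_lessThan_add by (simp add: x_def c_def sum.distrib)
  finally show ?thesis .
qed

lemma kdist_sq_nonneg:
  assumes A2: "kernel_A2 Zs K \<kappa>" and "u \<in> Zs" "v \<in> Zs"
  shows "0 \<le> kdist_sq K u v"
proof -
  have "0 \<le> (\<Sum>i<Suc 0. \<Sum>j<Suc 0. 1 * 1 * K u u + 1 * (- 1) * K u v + (- 1) * 1 * K v u + (- 1) * (- 1) * K v v)"
    using kernel_A2_psd_pair[OF A2, of "Suc 0" "\<lambda>_. u" "\<lambda>_. v" "\<lambda>_. 1" "\<lambda>_. - 1"] assms by simp
  moreover have "K v u = K u v"
    using A2 assms unfolding kernel_A2_def by blast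
  ultimately show ?thesis
    unfolding kdist_sq_def by simp
qed

lemma qform_gram_nonneg:
  assumes "kernel_A2 Zs K \<kappa>" "\<forall>i<n. Z i \<in> Zs"
  shows "0 \<le> qform n c (\<lambda>i j. K (Z i) (Z j))"
  unfolding qform_def using kernel_A2_psd[OF assms] .

lemma qform_gram_le:
  fixes Z Zh :: "nat \<Rightarrow> 'z::topological_space"
  assumes A2: "kernel_A2 Zs K \<kappa>" and Z: "\<forall>i<n. Z i \<in> Zs \<and> Zh i \<in> Zs"
  shows "qform n c (\<lambda>i j. K (Zh i) (Zh j))
           \<le> 2 * qform n c (\<lambda>i j. K (Z i) (Z j)) + 2 * qform n c (gram_diff K Z Zh)"
proof -
  have "0 \<le> (\<Sum>i<n. \<Sum>j<n. (2 * c i) * (2 * c j) * K (Z i) (Z j) + (2 * c i) * (- c j) * K (Z i) (Zh j)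
              + (- c i) * (2 * c j) * K (Zh i) (Z j) + (- c i) * (- c j) * K (Zh i) (Zh j))"
    by (rule kernel_A2_psd_pair[OF A2 Z])
  also have "\<dots> = qform n c (\<lambda>i j. 2 * K (Z i) (Z j) + 2 * gram_diff K Z Zh i j - K (Zh i) (Zh j))"
    unfolding qform_def gram_diff_def by (intro sum.cong refl) (simp add: algebra_simps)
  also have "\<dots> = 2 * qform n c (\<lambda>i j. K (Z i) (Z j)) + 2 * qform n c (gram_diff K Z Zh)
                  - qform n c (\<lambda>i j. K (Zh i) (Zh j))"
    by (simp add: qform_add qform_diff qform_scale)
  finally show ?thesis
    by simp
qed

lemma qform_gram_diff_nonneg:
  fixes Z Zh :: "nat \<Rightarrow> 'z::topological_space"
  assumes A2: "kernel_A2 Zs K \<kappa>" and Z: "\<forall>i<n. Z i \<in> Zs \<and> Zh i \<in> Zs"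
  shows "0 \<le> qform n c (gram_diff K Z Zh)"
proof -
  have "0 \<le> (\<Sum>i<n. \<Sum>j<n. c i * c j * K (Z i) (Z j) + c i * (- c j) * K (Z i) (Zh j)
              + (- c i) * c j * K (Zh i) (Z j) + (- c i) * (- c j) * K (Zh i) (Zh j))"
    by (rule kernel_A2_psd_pair[OF A2 Z])
  also have "\<dots> = qform n c (gram_diff K Z Zh)"
    unfolding qform_def gram_diff_def by (intro sum.cong refl) (simp add: algebra_simps)
  finally show ?thesis .
qed

lemma gram_spectral_decomp:
  assumes "kernel_A2 Zs K \<kappa>" "\<forall>i<n. Z i \<in> Zs"
  obtains U d where "spectral_decomp n (\<lambda>i j. K (Z i) (Z j) / real n) U d"
    and "gram n K Z = mat n n (\<lambda>(i, j). K (Z i) (Z j) / real n)"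
proof -
  have "mat_symmetric n (\<lambda>i j. K (Z i) (Z j) / real n)"
    using assms unfolding kernel_A2_def mat_symmetric_def by auto
  with spectral_decomp_exists that show ?thesis
    unfolding gram_def by auto
qed

lemma sum_min_eigs_gram_nonneg:
  assumes A2: "kernel_A2 Zs K \<kappa>" and Z: "\<forall>i<n. Z i \<in> Zs" and \<delta>: "0 \<le> \<delta>"
  shows "0 \<le> (\<Sum>j<n. min \<delta> (eigs (gram n K Z) ! j))"
proof -
  obtain U b where U: "spectral_decomp n (\<lambda>i j. K (Z i) (Z j) / real n) U b"
    and gram: "gram n K Z = mat n n (\<lambda>(i, j). K (Z i) (Z j) / real n)"
    using gram_spectral_decomp[OF A2 Z] .
  have "0 \<le> b k" if "k < n" for k
  proof -
    have "0 \<le> qform n (\<lambda>i. U i k) (\<lambda>i j. K (Z i) (Z j)) / real n"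
      using qform_gram_nonneg[OF A2 Z] by simp
    then show ?thesis
      using qform_eigenvector[OF U that] by (simp add: qform_divide)
  qed
  then show ?thesis
    unfolding gram sum_eigs_spectral_decomp[OF U] using \<delta> by (intro sum_nonneg) simp
qed

lemma sum_min_eigs_gram_le:
  fixes K :: "'z::topological_space \<Rightarrow> 'z \<Rightarrow> real"
  assumes A2: "kernel_A2 Zs K \<kappa>" and Z: "\<forall>i<n. Z i \<in> Zs \<and> Zh i \<in> Zs" and \<delta>: "0 \<le> \<delta>"
  shows "(\<Sum>j<n. min \<delta> (eigs (gram n K Zh) ! j))
           \<le> 2 * (\<Sum>j<n. min \<delta> (eigs (gram n K Z) ! j)) + 2 * Delta_bar n K Z Zh"
proof -
  define G where "G i j = K (Zh i) (Zh j) / real n" for i j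
  obtain U b where U: "spectral_decomp n (\<lambda>i j. K (Z i) (Z j) / real n) U b"
    and gram_Z: "gram n K Z = mat n n (\<lambda>(i, j). K (Z i) (Z j) / real n)"
    using gram_spectral_decomp[OF A2] Z by blast
  obtain W a where W: "spectral_decomp n G W a" and gram_Zh: "gram n K Zh = mat n n (\<lambda>(i, j). G i j)"
    using gram_spectral_decomp[OF A2, of n Zh] Z unfolding G_def by blast
  define q where "q k = qform n (\<lambda>i. U i k) (gram_diff K Z Zh) / real n" for k
  have "min \<delta> (qform n (\<lambda>i. U i k) G) \<le> 2 * min \<delta> (b k) + 2 * q k" if "k < n" for k
  proof -
    have "qform n (\<lambda>i. U i k) G \<le> 2 * b k + 2 * q k"
      using divide_right_mono[OF qform_gram_le[OF A2 Z, of "\<lambda>i. U i k"], of "real n"]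
      unfolding G_def q_def qform_divide qform_eigenvector[OF U that, symmetric]
      by (simp add: add_divide_distrib)
    moreover have "0 \<le> q k"
      unfolding q_def using qform_gram_diff_nonneg[OF A2 Z] by simp
    ultimately show ?thesis
      using \<delta> by (auto simp: min_def)
  qed
  then have "(\<Sum>k<n. min \<delta> (qform n (\<lambda>i. U i k) G)) \<le> (\<Sum>k<n. 2 * min \<delta> (b k) + 2 * q k)"
    by (intro sum_mono) simp
  moreover have "(\<Sum>k<n. q k) = Delta_bar n K Z Zh"
  proof -
    have "gram_diff K Z Zh i i = kdist_sq K (Z i) (Zh i)" if "i < n" for i
      using A2 Z that unfolding kernel_A2_def gram_diff_def kdist_sq_def by auto
    then show ?thesis
      using U unfolding q_def Delta_bar_def spectral_decomp_def
      by (simp add: sum_divide_distrib[symmetric] sum_qform_orth_mat_columns)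
  qed
  moreover have "(\<Sum>j<n. min \<delta> (a j)) \<le> (\<Sum>k<n. min \<delta> (qform n (\<lambda>i. U i k) G))"
    using U by (intro sum_min_eigenvalues_le[OF W]) (simp add: spectral_decomp_def)
  ultimately have "(\<Sum>j<n. min \<delta> (a j)) \<le> 2 * (\<Sum>k<n. min \<delta> (b k)) + 2 * Delta_bar n K Z Zh"
    by (simp only: sum.distrib sum_distrib_left[symmetric])
  then show ?thesis
    unfolding gram_Z gram_Zh sum_eigs_spectral_decomp[OF U] sum_eigs_spectral_decomp[OF W] .
qed

lemma Rhat_le:
  fixes K :: "'z::topological_space \<Rightarrow> 'z \<Rightarrow> real"
  assumes A2: "kernel_A2 Zs K \<kappa>" and Z: "\<forall>i<n. Z i \<in> Zs \<and> Zh i \<in> Zs" and \<delta>: "0 \<le> \<delta>"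
  shows "Rhat n K Zh \<delta> \<le> 2 * Rhat n K Z \<delta> + 2 * sqrt (Delta_bar n K Z Zh / real n)"
proof -
  define S where "S = (\<Sum>j<n. min \<delta> (eigs (gram n K Z) ! j))"
  define D where "D = Delta_bar n K Z Zh"
  have S: "0 \<le> S"
    unfolding S_def using sum_min_eigs_gram_nonneg[OF A2 _ \<delta>] Z by blast
  have D: "0 \<le> D"
    unfolding D_def Delta_bar_def using kdist_sq_nonneg[OF A2] Z by (intro mult_nonneg_nonneg sum_nonneg) auto
  have "(\<Sum>j<n. min \<delta> (eigs (gram n K Zh) ! j)) \<le> 4 * S + 4 * D"
    using sum_min_eigs_gram_le[OF A2 Z \<delta>] S D unfolding S_def D_def by linarith
  from divide_right_mono[OF this, of "real n"]
  have "Rhat n K Zh \<delta> \<le> sqrt (4 * (1 / real n * S) + 4 * (D / real n))"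
    unfolding Rhat_def by (simp add: add_divide_distrib)
  also have "\<dots> \<le> sqrt (4 * (1 / real n * S)) + sqrt (4 * (D / real n))"
    using S D by (intro sqrt_add_le_add_sqrt) auto
  also have "\<dots> = 2 * Rhat n K Z \<delta> + 2 * sqrt (D / real n)"
    unfolding Rhat_def S_def real_sqrt_mult by simp
  finally show ?thesis
    unfolding D_def .
qed

theorem lemma11:
  shows "\<exists>C>0. \<forall>(r::nat) (Zs::(nat \<Rightarrow> real) set) (K::(nat \<Rightarrow> real) \<Rightarrow> (nat \<Rightarrow> real) \<Rightarrow> real)
            (\<kappa>::real) (n::nat) (Z::nat \<Rightarrow> nat \<Rightarrow> real) (Zh::nat \<Rightarrow> nat \<Rightarrow> real) (\<delta>::real).
     (\<forall>z\<in>Zs. in_Rr r z) \<longrightarrow> kernel_A2 Zs K \<kappa> \<longrightarrow> 0 < n \<longrightarrow>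
     (\<forall>i<n. Z i \<in> Zs \<and> Zh i \<in> Zs) \<longrightarrow> 0 < \<delta> \<longrightarrow>
     20 * Delta_bar n K Z Zh \<le> \<delta> \<longrightarrow>
     Rhat n K Zh \<delta> \<le> C * Rhat n K Z \<delta> + C * sqrt (Delta_bar n K Z Zh / real n)"
proof (rule exI[of _ 2], intro conjI allI impI)
  show "(0::real) < 2"
    by simp
next
  fix r :: nat and Zs :: "(nat \<Rightarrow> real) set" and K :: "(nat \<Rightarrow> real) \<Rightarrow> (nat \<Rightarrow> real) \<Rightarrow> real"
    and \<kappa> :: real and n :: nat and Z Zh :: "nat \<Rightarrow> nat \<Rightarrow> real" and \<delta> :: real
  assume "kernel_A2 Zs K \<kappa>" "\<forall>i<n. Z i \<in> Zs \<and> Zh i \<in> Zs" "0 < \<delta>"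
  then show "Rhat n K Zh \<delta> \<le> 2 * Rhat n K Z \<delta> + 2 * sqrt (Delta_bar n K Z Zh / real n)"
    by (intro Rhat_le) auto
qed

end
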